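(* Let $f:\mathbb{B}\to\mathbb{H}$ be regular and $p\in(0,+\infty]$. Then $f\in H^p(\mathbb{B})$ if and only if there exists $J\in\mathbb{S}$ with $\|f_J\|_p<+\infty$. Moreover, if $\|f_J\|_p<+\infty$ for some $J\in\mathbb{S}$, then $\|f_J\|_p\le\|f\|_p\le 2^{1/p}\|f_J\|_p$ if $p\in(0,1)$, and $\|f_J\|_p\le\|f\|_p\le 2\|f_J\|_p$ if $p\in[1,+\infty]$.
   Context: $\mathbb{H}$ denotes the quaternions; $\mathbb{S}=\{q\in\mathbb{H}: q^2=-1\}$; for $I\in\mathbb{S}$, $L_I=\mathbb{R}+\mathbb{R}I$; $\mathbb{B}=\{q\in\mathbb{H}:|q|<1\}$; $\mathbb{B}_I=\mathbb{B}\cap L_I$; $e^{I\theta}=\cos\theta+I\sin\theta$. A function $f:\mathbb{B}\to\mathbb{H}$ is (slice) regular if for every $I\in\mathbb{S}$ its restriction $f_I=f|_{\mathbb{B}_I}$ has continuous partial derivatives and satisfies $\frac12(\partial_x+I\partial_y)f_I(x+yI)=0$ on $\mathbb{B}_I$; equivalently, $f(q)=\sum_{n\ge0}q^na_n$ with $a_n\in\mathbb{H}$, convergent on $\mathbb{B}$. Hardy norms: for $p\in(0,\infty)$, $M_p(f_I,r)=\left(\frac{1}{2\pi}\int_{-\pi}^{\pi}|f(re^{I\theta})|^pd\theta\right)^{1/p}$ (nondecreasing in $r\in[0,1)$), $\|f_I\|_p=\lim_{r\to1^-}M_p(f_I,r)\in[0,\infty]$, $\|f\|_p=\sup_{I\in\mathbb{S}}\|f_I\|_p$;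 for $p=\infty$, $\|f_I\|_\infty=\sup_{z\in\mathbb{B}_I}|f(z)|$ and $\|f\|_\infty=\sup_{q\in\mathbb{B}}|f(q)|$. $H^p(\mathbb{B})=\{f:\mathbb{B}\to\mathbb{H}\text{ regular}: \|f\|_p<+\infty\}$. *)

theory Defs
  imports "HOL-Analysis.Analysis"
begin

type_synonym quat = "real^4"

definition qmk :: "real \<Rightarrow> real \<Rightarrow> real \<Rightarrow> real \<Rightarrow> quat" where
  "qmk a b c d = vector [a, b, c, d]"

definition qmult :: "quat \<Rightarrow> quat \<Rightarrow> quat" where
  "qmult p q = (let a1 = p$1; b1 = p$2; c1 = p$3; d1 = p$4;
                    a2 = q$1; b2 = q$2; c2 = q$3; d2 = q$4 in
     qmk (a1*a2 - b1*b2 - c1*c2 - d1*d2)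
         (a1*b2 + b1*a2 + c1*d2 - d1*c2)
         (a1*c2 - b1*d2 + c1*a2 + d1*b2)
         (a1*d2 + b1*c2 - c1*b2 + d1*a2))"

definition qone :: quat where "qone = qmk 1 0 0 0"

definition qpow :: "quat \<Rightarrow> nat \<Rightarrow> quat" where
  "qpow q n = (qmult q ^^ n) qone"

text \<open>The modulus |q| of a quaternion is the Euclidean norm on real^4.\<close>

definition qsphere :: "quat set" where
  "qsphere = {q. qmult q q = - qone}"

definition qball :: "quat set" where
  "qball = {q. norm q < 1}"

definition qslice :: "quat \<Rightarrow> quat set" where
  "qslice I = {x *\<^sub>R qone + y *\<^sub>R I | x y. True}"

definition qexp_slice :: "quat \<Rightarrow> real \<Rightarrow> quat" where
  "qexp_slice I \<theta> = cos \<theta> *\<^sub>R qone + sin \<theta> *\<^sub>R I"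

text \<open>Slice regular functions on the unit ball, via the power series characterization
  f(q) = sum q^n a_n (convergent on the ball).\<close>

definition slice_regular :: "(quat \<Rightarrow> quat) \<Rightarrow> bool" where
  "slice_regular f \<longleftrightarrow> (\<exists>a :: nat \<Rightarrow> quat. \<forall>q \<in> qball. (\<lambda>n. qmult (qpow q n) (a n)) sums f q)"

definition Mp :: "real \<Rightarrow> (quat \<Rightarrow> quat) \<Rightarrow> quat \<Rightarrow> real \<Rightarrow> real" where
  "Mp p f I r = ((1 / (2 * pi)) * integral {-pi..pi} (\<lambda>\<theta>. norm (f (r *\<^sub>R qexp_slice I \<theta>)) powr p))
                 powr (1 / p)"

definition slice_hardy_norm :: "ereal \<Rightarrow> (quat \<Rightarrow> quat) \<Rightarrow> quat \<Rightarrow> ereal" where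
  "slice_hardy_norm p f I =
     (if p = \<infinity> then (SUP z \<in> qball \<inter> qslice I. ereal (norm (f z)))
      else Lim (at_left (1::real)) (\<lambda>r. ereal (Mp (real_of_ereal p) f I r)))"

definition hardy_norm :: "ereal \<Rightarrow> (quat \<Rightarrow> quat) \<Rightarrow> ereal" where
  "hardy_norm p f =
     (if p = \<infinity> then (SUP q \<in> qball. ereal (norm (f q)))
      else (SUP I \<in> qsphere. slice_hardy_norm p f I))"

definition hardy_space :: "ereal \<Rightarrow> (quat \<Rightarrow> quat) set" where
  "hardy_space p = {f. slice_regular f \<and> hardy_norm p f < \<infinity>}"

end

theory Submission
  imports Defs "HOL-Complex_Analysis.Cauchy_Integral_Formula"
begin

(*
  Write z = x + yJ. The representation formula
    f(x + yI) = 1/2 (f(z) + f(conj z)) - 1/2 I J (f(z) - f(conj z))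
  gives |f_I(z)| <= |f_J(z)| + |f_J(conj z)|. Raising this to the p-th power, with
  (a + b)^p <= a^p + b^p for p < 1 and (a + b)^p <= 2^(p-1) (a^p + b^p) for p >= 1, and
  integrating over circles (conj maps a circle to itself) yields
  M_p(f_I, r) <= 2^(1/p) M_p(f_J, r), resp. 2 M_p(f_J, r); for p = infinity one takes suprema.

  To pass to the limit r -> 1 one needs that M_p(f_I, r) increases with r, i.e. that |f_I|^p is
  subharmonic. The real coordinates of f_I are real parts of holomorphic functions, hence
  harmonic, and because the slice derivative commutes with left multiplication by I, the radial
  velocity r d/dr f_I and the angular velocity d/dtheta f_I = I (r d/dr f_I) are orthogonal of
  equal length. With Bessel's inequality this makes the polar Laplacian of (|f_I|^2 + eps)^(p/2)
  nonnegative, so its circle means increase; eps -> 0 then gives the claim.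
*)

section \<open>Quaternions and slices\<close>

lemma qmk_nth [simp]:
  "qmk a b c d $ 1 = a" "qmk a b c d $ 2 = b" "qmk a b c d $ 3 = c" "qmk a b c d $ 4 = d"
  by (simp_all add: qmk_def vector_def)

lemma qone_nth [simp]: "qone $ 1 = 1" "qone $ 2 = 0" "qone $ 3 = 0" "qone $ 4 = 0"
  by (simp_all add: qone_def)

lemma quat_eq_iff: "(p::quat) = q \<longleftrightarrow> p$1 = q$1 \<and> p$2 = q$2 \<and> p$3 = q$3 \<and> p$4 = q$4"
  by (auto simp: vec_eq_iff forall_4)

lemma qmult_nth:
  "qmult p q $ 1 = p$1*q$1 - p$2*q$2 - p$3*q$3 - p$4*q$4"
  "qmult p q $ 2 = p$1*q$2 + p$2*q$1 + p$3*q$4 - p$4*q$3"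
  "qmult p q $ 3 = p$1*q$3 - p$2*q$4 + p$3*q$1 + p$4*q$2"
  "qmult p q $ 4 = p$1*q$4 + p$2*q$3 - p$3*q$2 + p$4*q$1"
  by (simp_all add: qmult_def Let_def)

lemma norm_quat: "norm (q::quat) = sqrt (q$1^2 + q$2^2 + q$3^2 + q$4^2)"
  by (simp add: norm_vec_def L2_set_def sum_4)

lemma qmult_assoc: "qmult (qmult p q) r = qmult p (qmult q r)"
  unfolding quat_eq_iff qmult_nth by (intro conjI; algebra)

lemma norm_qmult: "norm (qmult p q) = norm p * norm q"
proof -
  have "(qmult p q$1)^2 + (qmult p q$2)^2 + (qmult p q$3)^2 + (qmult p q$4)^2 =
     (p$1^2 + p$2^2 + p$3^2 + p$4^2) * (q$1^2 + q$2^2 + q$3^2 + q$4^2)"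
    unfolding qmult_nth by algebra
  then show ?thesis by (simp add: norm_quat real_sqrt_mult)
qed

lemma qmult_one_left [simp]: "qmult qone q = q"
  and qmult_one_right [simp]: "qmult q qone = q"
  by (simp_all add: quat_eq_iff qmult_nth)

lemma qmult_add_left: "qmult (p + q) r = qmult p r + qmult q r"
  and qmult_add_right: "qmult r (p + q) = qmult r p + qmult r q"
  and qmult_minus_left: "qmult (- p) q = - qmult p q"
  and qmult_minus_right: "qmult p (- q) = - qmult p q"
  and qmult_scaleR_left: "qmult (c *\<^sub>R p) q = c *\<^sub>R qmult p q"
  and qmult_scaleR_right: "qmult p (c *\<^sub>R q) = c *\<^sub>R qmult p q"
  by (simp_all add: quat_eq_iff qmult_nth algebra_simps)

lemma bounded_linear_qmult_right: "bounded_linear (qmult p)"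
  by (simp add: linear_conv_bounded_linear[symmetric] linearI qmult_add_right qmult_scaleR_right)

lemma qsphere_iff: "I \<in> qsphere \<longleftrightarrow> I$1 = 0 \<and> norm I = 1"
proof -
  have "qmult I I = - qone \<longleftrightarrow> I$1 = 0 \<and> I$2^2 + I$3^2 + I$4^2 = 1"
  proof
    assume sq: "qmult I I = - qone"
    then have "I$1 * I$2 = 0" "I$1 * I$3 = 0" "I$1 * I$4 = 0"
      and "I$1^2 - I$2^2 - I$3^2 - I$4^2 = -1"
      by (auto simp: quat_eq_iff qmult_nth power2_eq_square)
    moreover have "I$1 = 0"
    proof (rule ccontr)
      assume "I$1 \<noteq> 0"
      with calculation have "I$1^2 = -1" by simp
      then show False by (smt (verit) zero_le_power2)
    qed
    ultimately show "I$1 = 0 \<and> I$2^2 + I$3^2 + I$4^2 = 1" by simp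
  qed (auto simp: quat_eq_iff qmult_nth power2_eq_square algebra_simps)
  then show ?thesis by (auto simp: qsphere_def norm_quat)
qed

lemma qsphere_nonempty: "qmk 0 1 0 0 \<in> qsphere"
  by (simp add: qsphere_iff norm_quat)

lemma qmult_qsphere_qsphere: "I \<in> qsphere \<Longrightarrow> qmult I (qmult I x) = - x"
  by (simp add: qsphere_def qmult_assoc[symmetric] qmult_minus_left)

lemma norm_qmult_qsphere: "I \<in> qsphere \<Longrightarrow> norm (qmult I x) = norm x"
  by (simp add: norm_qmult qsphere_iff)

lemma inner_qmult_qsphere: "I \<in> qsphere \<Longrightarrow> inner x (qmult I x) = 0"
  by (simp add: qsphere_iff inner_vec_def sum_4 qmult_nth algebra_simps)

definition qslice_point :: "quat \<Rightarrow> complex \<Rightarrow> quat" where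
  "qslice_point I z = Re z *\<^sub>R qone + Im z *\<^sub>R I"

lemma qslice_point_mult:
  "I \<in> qsphere \<Longrightarrow> qmult (qslice_point I z) (qslice_point I w) = qslice_point I (z * w)"
  by (simp add: qslice_point_def qsphere_def qmult_add_left qmult_add_right qmult_scaleR_left
      qmult_scaleR_right algebra_simps)

lemma qpow_qslice_point:
  assumes "I \<in> qsphere" shows "qpow (qslice_point I z) n = qslice_point I (z ^ n)"
proof (induction n)
  case (Suc n)
  then show ?case using qslice_point_mult[OF assms, of z "z ^ n"] by (simp add: qpow_def)
qed (simp add: qpow_def qslice_point_def)

lemma norm_qslice_point:
  assumes "I \<in> qsphere" shows "norm (qslice_point I z) = cmod z"
proof -
  have "I$1 = 0" "I$2^2 + I$3^2 + I$4^2 = 1"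
    using assms by (auto simp: qsphere_iff norm_quat)
  then have "(qslice_point I z $ 1)^2 + (qslice_point I z $ 2)^2 + (qslice_point I z $ 3)^2
      + (qslice_point I z $ 4)^2 = (Re z)^2 + (Im z)^2"
    by (simp add: qslice_point_def power_mult_distrib flip: distrib_left)
  then show ?thesis by (simp add: norm_quat cmod_def)
qed

lemma qmult_qslice_point_left: "qmult (qslice_point I w) x = Re w *\<^sub>R x + Im w *\<^sub>R qmult I x"
  by (simp add: qslice_point_def qmult_add_left qmult_scaleR_left)

lemma qslice_point_in_qslice: "qslice_point I z \<in> qslice I"
  by (auto simp: qslice_def qslice_point_def)

lemma qexp_slice_eq_qslice_point: "r *\<^sub>R qexp_slice I \<theta> = qslice_point I (rcis r \<theta>)"
  by (simp add: qexp_slice_def qslice_point_def scaleR_add_right)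

lemma quat_eq_qslice_point: "\<exists>I\<in>qsphere. \<exists>z. q = qslice_point I z"
proof (cases "q$2 = 0 \<and> q$3 = 0 \<and> q$4 = 0")
  case True
  then have "q = qslice_point (qmk 0 1 0 0) (of_real (q$1))"
    by (simp add: quat_eq_iff qslice_point_def)
  then show ?thesis using qsphere_nonempty by blast
next
  case False
  define v where "v = sqrt (q$2^2 + q$3^2 + q$4^2)"
  have "v > 0"
    using False by (auto simp: v_def sum_power2_gt_zero_iff add_nonneg_pos add_pos_nonneg)
  have v2: "v^2 = q$2^2 + q$3^2 + q$4^2"
    by (simp add: v_def)
  define I where "I = qmk 0 (q$2/v) (q$3/v) (q$4/v)"
  have "I \<in> qsphere"
    using \<open>v > 0\<close> by (simp add: I_def qsphere_iff norm_quat power_divide flip: add_divide_distrib v2)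
  moreover have "q = qslice_point I (Complex (q$1) v)"
    using \<open>v > 0\<close> by (simp add: quat_eq_iff qslice_point_def I_def)
  ultimately show ?thesis by blast
qed

lemma Mp_eq_integral:
  "Mp p f I r =
    (integral {-pi..pi} (\<lambda>\<theta>. norm (f (qslice_point I (rcis r \<theta>))) powr p) / (2 * pi)) powr (1 / p)"
  by (simp add: Mp_def qexp_slice_eq_qslice_point)

lemma inner_sq_add_le_orthogonal:
  fixes P V W :: "'a::real_inner"
  assumes VW: "inner V W = 0" and WV: "norm W = norm V"
  shows "(inner P V)\<^sup>2 + (inner P W)\<^sup>2 \<le> (norm P)\<^sup>2 * (norm V)\<^sup>2"
proof -
  define S where "S = (inner P V)\<^sup>2 + (inner P W)\<^sup>2"
  define u where "u = inner P V *\<^sub>R V + inner P W *\<^sub>R W"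
  have WW: "inner W W = (norm V)\<^sup>2" and VV: "inner V V = (norm V)\<^sup>2"
    using WV by (simp_all flip: power2_norm_eq_inner)
  have "inner P u = S"
    by (simp add: u_def S_def inner_add_right power2_eq_square)
  moreover have "inner u u = (norm V)\<^sup>2 * S"
    by (simp add: u_def S_def inner_add_left inner_add_right VW inner_commute[of W V] WW VV
        power2_eq_square algebra_simps)
  ultimately have "S\<^sup>2 \<le> (norm P)\<^sup>2 * ((norm V)\<^sup>2 * S)"
    using Cauchy_Schwarz_ineq[of P u] by (simp add: power2_norm_eq_inner)
  then have "S * S \<le> S * ((norm P)\<^sup>2 * (norm V)\<^sup>2)"
    by (simp add: power2_eq_square algebra_simps)
  moreover have "S \<ge> 0" by (simp add: S_def)
  ultimately have "S \<le> (norm P)\<^sup>2 * (norm V)\<^sup>2"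
    by (cases "S = 0") (simp_all add: mult_le_cancel_left)
  then show ?thesis by (simp add: S_def)
qed

text \<open>The Laplacian of T^q is q T^(q-1) (Laplacian of T) + q (q-1) T^(q-2) |grad T|^2;
  here 4 X and Y play the roles of the Laplacian and of the squared gradient of T.\<close>
lemma powr_laplacian_nonneg:
  fixes q T X Y :: real
  assumes q: "q > 0" and T: "T > 0" and X: "X \<ge> 0" and Y: "Y \<ge> 0" "Y \<le> 4 * T * X"
  shows "0 \<le> q * T powr (q - 1) * (4 * X) + q * (q - 1) * T powr (q - 2) * Y"
proof (cases "q \<ge> 1")
  case True
  then show ?thesis using assms by simp
next
  case False
  have TT: "T powr (q - 2) * T = T powr (q - 1)"
    using powr_mult_base[of T "q - 2"] T by (simp add: mult.commute)
  have "q * (q - 1) \<le> 0"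
    using False q by (simp add: mult_nonneg_nonpos)
  then have "q * (q - 1) * T powr (q - 2) \<le> 0"
    by (simp add: mult_nonpos_nonneg)
  then have "q * (q - 1) * T powr (q - 2) * (4 * T * X) \<le> q * (q - 1) * T powr (q - 2) * Y"
    by (rule mult_left_mono_neg[OF Y(2)])
  also have "q * (q - 1) * T powr (q - 2) * (4 * T * X) = 4 * q * (q - 1) * X * T powr (q - 1)"
    by (simp flip: TT)
  finally have "q * T powr (q - 1) * (4 * X) + 4 * q * (q - 1) * X * T powr (q - 1)
      \<le> q * T powr (q - 1) * (4 * X) + q * (q - 1) * T powr (q - 2) * Y"
    by simp
  moreover have "q * T powr (q - 1) * (4 * X) + 4 * q * (q - 1) * X * T powr (q - 1)
      = 4 * q\<^sup>2 * X * T powr (q - 1)"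
    by (simp add: power2_eq_square algebra_simps)
  moreover have "0 \<le> 4 * q\<^sup>2 * X * T powr (q - 1)"
    using X by simp
  ultimately show ?thesis by linarith
qed

lemma powr_add_le_subadditive:
  fixes a b p :: real
  assumes "0 < p" "p \<le> 1" "0 \<le> a" "0 \<le> b"
  shows "(a + b) powr p \<le> a powr p + b powr p"
proof (cases "a + b = 0")
  case False
  define s where "s = a + b"
  have s: "s > 0" using False assms by (simp add: s_def)
  have frac: "x / s \<le> (x / s) powr p" if "0 \<le> x" "x \<le> s" for x
  proof (cases "x = 0")
    case False
    have "(x / s) powr 1 \<le> (x / s) powr p"
      using that s False assms by (intro powr_mono') (auto simp: field_simps)
    then show ?thesis using that s by simp
  qed simp
  have "a / s + b / s = 1" using s by (simp add: s_def flip: add_divide_distrib)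
  then have "1 \<le> (a / s) powr p + (b / s) powr p"
    using frac[of a] frac[of b] assms by (simp add: s_def)
  then have "s powr p * 1 \<le> s powr p * ((a / s) powr p + (b / s) powr p)"
    by (intro mult_left_mono) auto
  also have "\<dots> = a powr p + b powr p"
    using s assms by (simp add: distrib_left powr_divide)
  finally show ?thesis by (simp add: s_def)
qed (use assms in simp)

lemma powr_add_le_convex:
  fixes a b p :: real
  assumes "1 \<le> p" "0 \<le> a" "0 \<le> b"
  shows "(a + b) powr p \<le> 2 powr (p - 1) * (a powr p + b powr p)"
proof -
  have "((a + b) / 2) powr p \<le> (a powr p + b powr p) / 2"
  proof (cases "a = 0 \<or> b = 0")
    case True
    have "(x / 2) powr p \<le> x powr p / 2" if "0 \<le> x" for x
    proof -
      have "2 \<le> (2::real) powr p"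
        using powr_mono[of 1 p 2] assms by simp
      then have "x powr p / 2 powr p \<le> x powr p / 2"
        by (intro divide_left_mono) auto
      then show ?thesis using that by (simp add: powr_divide)
    qed
    then show ?thesis using True assms by auto
  next
    case False
    then show ?thesis
      using assms convex_onD[OF powr_convex[OF assms(1)], of "1/2" a b]
      by (simp add: field_simps)
  qed
  then have "2 powr p * ((a + b) / 2) powr p \<le> 2 powr p * ((a powr p + b powr p) / 2)"
    by (intro mult_left_mono) auto
  then show ?thesis
    using assms by (simp add: powr_divide powr_diff)
qed

lemma powr_add_le:
  fixes a b p :: real
  assumes "0 < p" "0 \<le> a" "0 \<le> b"
  shows "(a + b) powr p \<le> (if p < 1 then 1 else 2 powr (p - 1)) * (a powr p + b powr p)"
  using powr_add_le_subadditive[of p a b] powr_add_le_convex[of p a b] assms by auto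

lemma sums_vec_lambda:
  fixes x :: "nat \<Rightarrow> real ^ 'n"
  assumes "\<And>k. (\<lambda>n. x n $ k) sums X $ k"
  shows "x sums X"
  using assms unfolding sums_def by (intro vec_tendstoI) simp

lemma has_vector_derivative_vec_lambda:
  fixes g :: "'n::finite \<Rightarrow> real \<Rightarrow> real"
  assumes "\<And>k. (g k has_real_derivative g' k) F"
  shows "((\<lambda>x. \<chi> k. g k x) has_vector_derivative (\<chi> k. g' k)) F"
proof -
  have expand: "(\<chi> k. c k) = (\<Sum>k\<in>UNIV. c k *\<^sub>R axis k 1)" for c :: "'n \<Rightarrow> real"
    using basis_expansion[of "\<chi> k. c k"] by (simp add: scalar_mult_eq_scaleR)
  have "((\<lambda>x. g k x *\<^sub>R axis k 1) has_vector_derivative g' k *\<^sub>R axis k 1) F" for k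
    using bounded_linear.has_vector_derivative[OF bounded_linear_scaleR_left
        assms[of k, unfolded has_real_derivative_iff_has_vector_derivative]] by blast
  then show ?thesis
    unfolding expand by (intro has_vector_derivative_sum)
qed

lemma has_vector_derivative_rcis_radius:
  assumes "(g has_field_derivative g') (at (rcis r \<theta>))"
  shows "((\<lambda>r. g (rcis r \<theta>)) has_vector_derivative cis \<theta> * g') (at r)"
proof -
  have "((\<lambda>r. rcis r \<theta>) has_vector_derivative cis \<theta>) (at r)"
    unfolding rcis_def
    using has_vector_derivative_mult_left[OF has_vector_derivative_of_real[OF DERIV_ident]]
    by simp
  from field_vector_diff_chain_at[OF this assms] show ?thesis
    by (simp add: o_def mult.commute)
qed

lemma has_vector_derivative_rcis_angle:
  assumes "(g has_field_derivative g') (at (rcis r \<theta>))"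
  shows "((\<lambda>\<theta>. g (rcis r \<theta>)) has_vector_derivative \<i> * rcis r \<theta> * g') (at \<theta>)"
proof -
  have "((\<lambda>\<theta>. rcis r \<theta>) has_vector_derivative \<i> * rcis r \<theta>) (at \<theta>)"
    unfolding rcis_def
    using has_vector_derivative_mult_right[OF has_derivative_cis[OF has_derivative_ident,
          of \<theta> UNIV, folded has_vector_derivative_def], of "complex_of_real r"]
    by (simp add: mult.left_commute)
  from field_vector_diff_chain_at[OF this assms] show ?thesis
    by (simp add: o_def mult.commute)
qed

lemma rcis_minus_pi: "rcis r (-pi) = rcis r pi"
  by (simp add: rcis_def complex_eq_iff)

definition sqnorm_powr :: "real \<Rightarrow> real \<Rightarrow> 'a::real_inner \<Rightarrow> real" where
  "sqnorm_powr \<epsilon> q x = ((norm x)\<^sup>2 + \<epsilon>) powr q"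

text \<open>The first and second derivative of sqnorm_powr along a curve through x with velocity v
  and acceleration w.\<close>

definition sqnorm_powr_deriv :: "real \<Rightarrow> real \<Rightarrow> 'a::real_inner \<Rightarrow> 'a \<Rightarrow> real" where
  "sqnorm_powr_deriv \<epsilon> q x v = q * ((norm x)\<^sup>2 + \<epsilon>) powr (q - 1) * (2 * inner x v)"

definition sqnorm_powr_deriv2 :: "real \<Rightarrow> real \<Rightarrow> 'a::real_inner \<Rightarrow> 'a \<Rightarrow> 'a \<Rightarrow> real" where
  "sqnorm_powr_deriv2 \<epsilon> q x v w =
     q * (q - 1) * ((norm x)\<^sup>2 + \<epsilon>) powr (q - 2) * (2 * inner x v)\<^sup>2
     + q * ((norm x)\<^sup>2 + \<epsilon>) powr (q - 1) * (2 * (inner v v + inner x w))"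

lemma has_real_derivative_inner_self:
  fixes P :: "real \<Rightarrow> 'a::real_inner"
  assumes "(P has_vector_derivative P') (at x)"
  shows "((\<lambda>x. inner (P x) (P x)) has_real_derivative 2 * inner (P x) P') (at x)"
  using bounded_bilinear.has_vector_derivative[OF bounded_bilinear_inner assms assms]
  by (simp add: has_real_derivative_iff_has_vector_derivative inner_commute[of P'])

lemma has_real_derivative_sqnorm_powr:
  fixes P :: "real \<Rightarrow> 'a::real_inner"
  assumes "(P has_vector_derivative P') (at x)" "\<epsilon> > 0"
  shows "((\<lambda>x. sqnorm_powr \<epsilon> q (P x)) has_real_derivative sqnorm_powr_deriv \<epsilon> q (P x) P') (at x)"
proof -
  have "((\<lambda>x. inner (P x) (P x) + \<epsilon>) has_real_derivative 2 * inner (P x) P') (at x)"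
    using has_real_derivative_inner_self[OF assms(1)] by (intro derivative_eq_intros) auto
  moreover have "inner (P x) (P x) + \<epsilon> > 0"
    using assms(2) by (simp add: add_nonneg_pos)
  ultimately show ?thesis
    using DERIV_fun_powr[of "\<lambda>x. inner (P x) (P x) + \<epsilon>", of _ x q]
    by (simp add: sqnorm_powr_def sqnorm_powr_deriv_def power2_norm_eq_inner mult.assoc)
qed

lemma has_real_derivative_sqnorm_powr_deriv:
  fixes P P1 :: "real \<Rightarrow> 'a::real_inner"
  assumes "(P has_vector_derivative P1 x) (at x)" "(P1 has_vector_derivative P2) (at x)" "\<epsilon> > 0"
  shows "((\<lambda>x. sqnorm_powr_deriv \<epsilon> q (P x) (P1 x)) has_real_derivative
    sqnorm_powr_deriv2 \<epsilon> q (P x) (P1 x) P2) (at x)"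
proof -
  have "((\<lambda>x. inner (P x) (P1 x)) has_real_derivative inner (P1 x) (P1 x) + inner (P x) P2) (at x)"
    using bounded_bilinear.has_vector_derivative[OF bounded_bilinear_inner assms(1,2)]
    by (simp add: has_real_derivative_iff_has_vector_derivative add.commute)
  from DERIV_cmult[OF this, of 2]
  have "((\<lambda>x. 2 * inner (P x) (P1 x)) has_real_derivative
      2 * (inner (P1 x) (P1 x) + inner (P x) P2)) (at x)" .
  from DERIV_mult[OF DERIV_cmult[OF has_real_derivative_sqnorm_powr[OF assms(1,3), of "q - 1"],
        of q] this]
  show ?thesis
    by (simp add: sqnorm_powr_def sqnorm_powr_deriv_def sqnorm_powr_deriv2_def power2_eq_square
        algebra_simps)
qed

text \<open>In polar coordinates, with V = r P_r, W = P_\<theta>, A = r^2 P_rr and B = P_\<theta>\<theta>, the sum below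
  is the polar Laplacian of sqnorm_powr along P. It is nonnegative when P is harmonic
  (V + A + B = 0) and its radial and angular velocities are orthogonal of equal length.\<close>
lemma sqnorm_powr_polar_laplacian_nonneg:
  fixes P V W A B :: "'a::real_inner"
  assumes "q > 0" "\<epsilon> > 0" and harm: "V + A + B = 0"
    and VW: "inner V W = 0" "norm W = norm V"
  shows "0 \<le> sqnorm_powr_deriv \<epsilon> q P V + sqnorm_powr_deriv2 \<epsilon> q P V A + sqnorm_powr_deriv2 \<epsilon> q P W B"
proof -
  define T where "T = (norm P)\<^sup>2 + \<epsilon>"
  define Y where "Y = 4 * ((inner P V)\<^sup>2 + (inner P W)\<^sup>2)"
  have harm': "inner P V + inner P A + inner P B = 0"
    using arg_cong[OF harm, of "inner P"] by (simp add: inner_add_right)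
  have "sqnorm_powr_deriv \<epsilon> q P V + sqnorm_powr_deriv2 \<epsilon> q P V A + sqnorm_powr_deriv2 \<epsilon> q P W B
      = q * T powr (q - 1) * (4 * (norm V)\<^sup>2) + q * (q - 1) * T powr (q - 2) * Y
        + 2 * q * T powr (q - 1) * (inner P V + inner P A + inner P B)"
  proof -
    have "inner V V = (norm V)\<^sup>2" "inner W W = (norm V)\<^sup>2"
      using VW(2) by (simp_all flip: power2_norm_eq_inner)
    then show ?thesis
      unfolding sqnorm_powr_deriv_def sqnorm_powr_deriv2_def T_def[symmetric]
      by (simp add: Y_def power_mult_distrib algebra_simps)
  qed
  also have "\<dots> = q * T powr (q - 1) * (4 * (norm V)\<^sup>2) + q * (q - 1) * T powr (q - 2) * Y"
    by (simp add: harm')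
  also have "\<dots> \<ge> 0"
  proof (rule powr_laplacian_nonneg)
    have "Y \<le> 4 * ((norm P)\<^sup>2 * (norm V)\<^sup>2)"
      using inner_sq_add_le_orthogonal[OF VW, of P] by (simp add: Y_def)
    also have "\<dots> \<le> 4 * T * (norm V)\<^sup>2"
      using \<open>\<epsilon> > 0\<close> by (simp add: T_def algebra_simps)
    finally show "Y \<le> 4 * T * (norm V)\<^sup>2" .
  qed (use assms in \<open>auto simp: T_def Y_def add_nonneg_pos\<close>)
  finally show ?thesis .
qed

lemma sqnorm_powr_deriv_scaleR:
  "c * sqnorm_powr_deriv \<epsilon> q x v = sqnorm_powr_deriv \<epsilon> q x (c *\<^sub>R v)"
  by (simp add: sqnorm_powr_deriv_def)

lemma sqnorm_powr_deriv2_scaleR: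
  "c\<^sup>2 * sqnorm_powr_deriv2 \<epsilon> q x v w = sqnorm_powr_deriv2 \<epsilon> q x (c *\<^sub>R v) (c\<^sup>2 *\<^sub>R w)"
  by (simp add: sqnorm_powr_deriv2_def power_mult_distrib power2_eq_square algebra_simps)

lemma sqnorm_add_ne_zero: "\<epsilon> > 0 \<Longrightarrow> (norm x)\<^sup>2 + \<epsilon> \<noteq> 0"
  by (metis add_nonneg_pos zero_le_power2 less_irrefl)

lemma continuous_on_sqnorm_powr [continuous_intros]:
  fixes P :: "'b::topological_space \<Rightarrow> 'a::real_inner"
  assumes "continuous_on S P" "\<epsilon> > 0"
  shows "continuous_on S (\<lambda>x. sqnorm_powr \<epsilon> q (P x))"
  unfolding sqnorm_powr_def using assms by (intro continuous_intros) (auto simp: sqnorm_add_ne_zero)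

lemma sqnorm_powr_zero: "sqnorm_powr 0 q x = norm x powr (2 * q)"
  unfolding sqnorm_powr_def
  by (simp only: add_0_right powr_numeral[symmetric, OF norm_ge_zero] powr_powr)

lemma continuous_on_section:
  assumes "continuous_on (X \<times> Y) (\<lambda>(x, t). G x t)" "x \<in> X"
  shows "continuous_on Y (G x)"
proof -
  have "continuous_on Y (\<lambda>t. (\<lambda>(x, t). G x t) (x, t))"
    by (rule continuous_on_compose2[OF assms(1)]) (use assms(2) in \<open>auto intro!: continuous_intros\<close>)
  then show ?thesis by simp
qed

lemma has_real_derivative_integral_param:
  fixes G G' :: "real \<Rightarrow> real \<Rightarrow> real"
  assumes X: "open X" "convex X" "x \<in> X"
    and deriv: "\<And>x t. x \<in> X \<Longrightarrow> ((\<lambda>x. G x t) has_real_derivative G' x t) (at x)"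
    and cont: "continuous_on (X \<times> {a..b}) (\<lambda>(x, t). G x t)"
      "continuous_on (X \<times> {a..b}) (\<lambda>(x, t). G' x t)"
  shows "((\<lambda>x. integral {a..b} (G x)) has_real_derivative integral {a..b} (G' x)) (at x)"
proof -
  have "((\<lambda>x. integral (cbox a b) (G x)) has_real_derivative integral (cbox a b) (G' x))
      (at x within X)"
  proof (rule leibniz_rule_field_derivative[OF _ _ _ X(3,2)])
    show "((\<lambda>x. G x t) has_field_derivative G' x t) (at x within X)" if "x \<in> X" for x t
      using deriv[OF that] by (rule has_field_derivative_at_within)
    show "G x integrable_on cbox a b" if "x \<in> X" for x
      using continuous_on_section[OF cont(1) that] by (simp add: integrable_continuous_real)
  qed (use cont(2) in simp)
  then show ?thesis
    using at_within_open[OF X(3,1)] by simp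
qed

lemma le_if_has_real_derivative_nonneg:
  fixes f :: "real \<Rightarrow> real"
  assumes "a \<le> b"
    and "\<And>x. a \<le> x \<Longrightarrow> x \<le> b \<Longrightarrow> (f has_real_derivative f' x) (at x)"
    and "\<And>x. a < x \<Longrightarrow> x < b \<Longrightarrow> 0 \<le> f' x"
  shows "f a \<le> f b"
proof (rule DERIV_nonneg_imp_increasing_open[OF assms(1)])
  show "\<exists>y. (f has_real_derivative y) (at x) \<and> 0 \<le> y" if "a < x" "x < b" for x
    using assms(2)[of x] assms(3)[OF that] that by auto
  show "continuous_on {a..b} f"
    by (rule DERIV_continuous_on[where D = f']) (simp add: assms(2) has_field_derivative_at_within)
qed

lemma nonneg_if_DERIV_ident_mult_nonneg:
  fixes m m' :: "real \<Rightarrow> real"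
  assumes deriv: "\<And>y. 0 \<le> y \<Longrightarrow> y < 1 \<Longrightarrow> (m has_real_derivative m' y) (at y)"
    and nonneg: "\<And>y. 0 < y \<Longrightarrow> y < 1 \<Longrightarrow> 0 \<le> m y + y * m' y"
    and x: "0 < x" "x < 1"
  shows "0 \<le> m x"
proof -
  have "0 * m 0 \<le> x * m x"
  proof (rule le_if_has_real_derivative_nonneg[where f = "\<lambda>x. x * m x" and f' = "\<lambda>y. m y + y * m' y"])
    show "((\<lambda>x. x * m x) has_real_derivative m y + y * m' y) (at y)" if "0 \<le> y" "y \<le> x" for y
      using DERIV_mult[OF DERIV_ident deriv[of y]] that x by (simp add: mult.commute)
  qed (use x nonneg in auto)
  then show ?thesis using x by (simp add: zero_le_mult_iff)
qed

lemma circle_integral_laplacian_nonneg: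
  fixes Ur Urr Ut Utt :: "real \<Rightarrow> real"
  assumes dUt: "\<And>\<theta>. (Ut has_real_derivative Utt \<theta>) (at \<theta>)" and periodic: "Ut (-pi) = Ut pi"
    and int: "Ur integrable_on {-pi..pi}" "Urr integrable_on {-pi..pi}"
    and subharmonic: "\<And>\<theta>. 0 \<le> x * Ur \<theta> + x\<^sup>2 * Urr \<theta> + Utt \<theta>" and x: "0 < x"
  shows "0 \<le> integral {-pi..pi} Ur + x * integral {-pi..pi} Urr"
proof -
  have "(Utt has_integral (Ut pi - Ut (-pi))) {-pi..pi}"
    using dUt by (intro fundamental_theorem_of_calculus)
      (auto simp: has_real_derivative_iff_has_vector_derivative[symmetric]
        intro: has_field_derivative_at_within)
  then have "((\<lambda>\<theta>. x * Ur \<theta> + x\<^sup>2 * Urr \<theta> + Utt \<theta>) has_integral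
      x * integral {-pi..pi} Ur + x\<^sup>2 * integral {-pi..pi} Urr + 0) {-pi..pi}"
    using int periodic by (intro has_integral_add has_integral_mult_right integrable_integral) auto
  then have "0 \<le> x * integral {-pi..pi} Ur + x\<^sup>2 * integral {-pi..pi} Urr + 0"
    by (rule has_integral_nonneg) (rule subharmonic)
  also have "\<dots> = x * (integral {-pi..pi} Ur + x * integral {-pi..pi} Urr)"
    by (simp add: power2_eq_square algebra_simps)
  finally show ?thesis using x by (simp add: zero_le_mult_iff)
qed

text \<open>Ut stands for the angular derivative of U, but only its periodicity and its derivative Utt
  enter, through the fundamental theorem of calculus.\<close>
lemma circle_mean_mono:
  fixes U Ur Urr Ut Utt :: "real \<Rightarrow> real \<Rightarrow> real"
  assumes dU: "\<And>r \<theta>. \<bar>r\<bar> < 1 \<Longrightarrow> ((\<lambda>r. U r \<theta>) has_real_derivative Ur r \<theta>) (at r)"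
    and dUr: "\<And>r \<theta>. \<bar>r\<bar> < 1 \<Longrightarrow> ((\<lambda>r. Ur r \<theta>) has_real_derivative Urr r \<theta>) (at r)"
    and dUt: "\<And>r \<theta>. \<bar>r\<bar> < 1 \<Longrightarrow> ((\<lambda>\<theta>. Ut r \<theta>) has_real_derivative Utt r \<theta>) (at \<theta>)"
    and periodic: "\<And>r. \<bar>r\<bar> < 1 \<Longrightarrow> Ut r (-pi) = Ut r pi"
    and cont: "continuous_on ({-1<..<1} \<times> {-pi..pi}) (\<lambda>(r, \<theta>). U r \<theta>)"
      "continuous_on ({-1<..<1} \<times> {-pi..pi}) (\<lambda>(r, \<theta>). Ur r \<theta>)"
      "continuous_on ({-1<..<1} \<times> {-pi..pi}) (\<lambda>(r, \<theta>). Urr r \<theta>)"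
    and subharmonic: "\<And>r \<theta>. 0 < r \<Longrightarrow> r < 1 \<Longrightarrow> 0 \<le> r * Ur r \<theta> + r\<^sup>2 * Urr r \<theta> + Utt r \<theta>"
    and rs: "0 \<le> r" "r \<le> s" "s < 1"
  shows "integral {-pi..pi} (U r) \<le> integral {-pi..pi} (U s)"
proof -
  define X :: "real set" where "X = {-1<..<1}"
  have X: "open X" "convex X" "\<And>x. x \<in> X \<longleftrightarrow> \<bar>x\<bar> < 1"
    by (auto simp: X_def)
  note cont = cont[folded X_def]
  define m1 where "m1 x = integral {-pi..pi} (Ur x)" for x
  define m2 where "m2 x = integral {-pi..pi} (Urr x)" for x
  have dm: "((\<lambda>x. integral {-pi..pi} (U x)) has_real_derivative m1 x) (at x)" if "x \<in> X" for x
    unfolding m1_def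
    by (rule has_real_derivative_integral_param[OF X(1,2) that _ cont(1,2)]) (simp add: dU X)
  have dm1: "(m1 has_real_derivative m2 x) (at x)" if "x \<in> X" for x
    unfolding m1_def m2_def
    by (rule has_real_derivative_integral_param[OF X(1,2) that _ cont(2,3)]) (simp add: dUr X)
  have m1: "0 \<le> m1 x" if "0 < x" "x < 1" for x
  proof (rule nonneg_if_DERIV_ident_mult_nonneg[OF dm1 _ that])
    show "0 \<le> m1 y + y * m2 y" if "0 < y" "y < 1" for y
    proof -
      have "y \<in> X" using that by (simp add: X)
      then show ?thesis
        unfolding m1_def m2_def using dUt[of y] periodic[of y] subharmonic[OF that] that
          integrable_continuous_real[OF continuous_on_section[OF cont(2)]]
          integrable_continuous_real[OF continuous_on_section[OF cont(3)]]
        by (intro circle_integral_laplacian_nonneg[where Ut = "Ut y" and Utt = "Utt y"]) auto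
    qed
  qed (simp add: X)
  show ?thesis
  proof (rule le_if_has_real_derivative_nonneg[where f' = m1, OF rs(2)])
    show "((\<lambda>x. integral {-pi..pi} (U x)) has_real_derivative m1 x) (at x)" if "r \<le> x" "x \<le> s" for x
      by (rule dm) (use rs that in \<open>simp add: X\<close>)
    show "0 \<le> m1 x" if "r < x" "x < s" for x
      by (rule m1) (use rs that in simp_all)
  qed
qed

lemma mono_tendsto_SUP_at_left:
  fixes g :: "real \<Rightarrow> 'a::{complete_linorder, linorder_topology}"
  assumes mono: "\<And>r s. a \<le> r \<Longrightarrow> r \<le> s \<Longrightarrow> s < b \<Longrightarrow> g r \<le> g s" and "a < b"
  shows "(g \<longlongrightarrow> (SUP r\<in>{a..<b}. g r)) (at_left b)"
proof (rule order_tendstoI)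
  fix y assume "y < (SUP r\<in>{a..<b}. g r)"
  then obtain r where r: "r \<in> {a..<b}" "y < g r"
    by (auto simp: less_SUP_iff)
  have "\<forall>\<^sub>F x in at_left b. x \<in> {r<..<b}"
    using r by (intro eventually_at_left_real) auto
  then show "\<forall>\<^sub>F x in at_left b. y < g x"
  proof (rule eventually_mono)
    fix x assume "x \<in> {r<..<b}"
    then have "g r \<le> g x" using r by (intro mono) auto
    with r(2) show "y < g x" by (rule less_le_trans)
  qed
next
  fix y assume y: "(SUP r\<in>{a..<b}. g r) < y"
  have "\<forall>\<^sub>F x in at_left b. x \<in> {a<..<b}"
    using \<open>a < b\<close> by (rule eventually_at_left_real)
  then show "\<forall>\<^sub>F x in at_left b. g x < y"
  proof (rule eventually_mono)
    fix x assume "x \<in> {a<..<b}"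
    then have "g x \<le> (SUP r\<in>{a..<b}. g r)" by (intro SUP_upper) auto
    then show "g x < y" using y by (rule le_less_trans)
  qed
qed

section \<open>Slice power series\<close>

locale qpowser =
  fixes a :: "nat \<Rightarrow> quat" and f :: "quat \<Rightarrow> quat"
  assumes sums_qpowser: "q \<in> qball \<Longrightarrow> (\<lambda>n. qmult (qpow q n) (a n)) sums f q"
begin

lemma sums_qslice:
  assumes "I \<in> qsphere" "cmod z < 1"
  shows "(\<lambda>n. qmult (qslice_point I (z ^ n)) (a n)) sums f (qslice_point I z)"
  using sums_qpowser[of "qslice_point I z"] assms
  by (simp add: qball_def norm_qslice_point qpow_qslice_point)

lemma representation_formula:
  assumes I: "I \<in> qsphere" and J: "J \<in> qsphere" and z: "cmod z < 1"
  defines "A \<equiv> f (qslice_point J z)" and "B \<equiv> f (qslice_point J (cnj z))"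
  shows "f (qslice_point I z) = (1/2) *\<^sub>R (A + B) - (1/2) *\<^sub>R qmult I (qmult J (A - B))"
proof -
  define s where "s n = qmult (qslice_point J (z ^ n)) (a n)" for n
  define t where "t n = qmult (qslice_point J (cnj z ^ n)) (a n)" for n
  have "(\<lambda>n. (1/2) *\<^sub>R (s n + t n) - (1/2) *\<^sub>R qmult I (qmult J (s n - t n))) sums
      ((1/2) *\<^sub>R (A + B) - (1/2) *\<^sub>R qmult I (qmult J (A - B)))"
    unfolding s_def t_def A_def B_def using z
    by (intro sums_diff sums_scaleR_right sums_add sums_qslice J
        bounded_linear.sums[OF bounded_linear_qmult_right]) auto
  moreover have "(1/2) *\<^sub>R (s n + t n) - (1/2) *\<^sub>R qmult I (qmult J (s n - t n)) =
      qmult (qslice_point I (z ^ n)) (a n)" for n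
  proof -
    have "s n + t n = (2 * Re (z ^ n)) *\<^sub>R a n" "s n - t n = (2 * Im (z ^ n)) *\<^sub>R qmult J (a n)"
      by (simp_all add: s_def t_def qmult_qslice_point_left vec_eq_iff flip: complex_cnj_power)
    then show ?thesis
      by (simp add: qmult_scaleR_right qmult_qsphere_qsphere[OF J] qmult_minus_right
          qmult_qslice_point_left)
  qed
  ultimately show ?thesis
    using sums_qslice[OF I z] sums_unique2 by simp
qed

lemma norm_qslice_le:
  assumes "I \<in> qsphere" "J \<in> qsphere" "cmod z < 1"
  shows "norm (f (qslice_point I z)) \<le> norm (f (qslice_point J z)) + norm (f (qslice_point J (cnj z)))"
proof -
  define A where "A = f (qslice_point J z)"
  define B where "B = f (qslice_point J (cnj z))"
  have "norm (f (qslice_point I z))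
      \<le> norm ((1/2) *\<^sub>R (A + B)) + norm ((1/2) *\<^sub>R qmult I (qmult J (A - B)))"
    unfolding representation_formula[OF assms] A_def B_def by (rule norm_triangle_ineq4)
  also have "\<dots> = (1/2) * norm (A + B) + (1/2) * norm (A - B)"
    by (simp add: norm_qmult_qsphere assms)
  also have "\<dots> \<le> norm A + norm B"
    using norm_triangle_ineq[of A B] norm_triangle_ineq4[of A B] by simp
  finally show ?thesis by (simp add: A_def B_def)
qed

end

text \<open>This turns left multiplication by points of L_I into complex multiplication
  (mult_qcomplexify), so the coordinates of f on L_I become real parts of holomorphic
  functions.\<close>
definition qcomplexify :: "quat \<Rightarrow> quat \<Rightarrow> 4 \<Rightarrow> complex" where
  "qcomplexify I x k = Complex (x $ k) (- qmult I x $ k)"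

lemma bounded_linear_qcomplexify: "bounded_linear (\<lambda>x. qcomplexify I x k)"
proof -
  have "linear (\<lambda>x. qcomplexify I x k)"
    by (rule linearI) (simp_all add: qcomplexify_def complex_eq_iff qmult_add_right qmult_scaleR_right)
  then show ?thesis by (simp add: linear_conv_bounded_linear)
qed

lemma qcomplexify_scaleR: "qcomplexify I (c *\<^sub>R x) k = of_real c * qcomplexify I x k"
  by (simp add: qcomplexify_def complex_eq_iff qmult_scaleR_right)

lemma mult_qcomplexify:
  assumes "I \<in> qsphere"
  shows "w * qcomplexify I x k = qcomplexify I (qmult (qslice_point I w) x) k"
  using qmult_qsphere_qsphere[OF assms, of x]
  by (simp add: qcomplexify_def complex_eq_iff qmult_qslice_point_left qmult_add_right
      qmult_scaleR_right vec_eq_iff algebra_simps)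

lemma sums_qcomplexify_eq:
  assumes "\<And>k. (\<lambda>n. qcomplexify I (x n) k) sums s k"
  shows "s k = qcomplexify I (\<chi> j. Re (s j)) k"
proof -
  have "x sums (\<chi> j. Re (s j))"
    using sums_Re[OF assms] by (intro sums_vec_lambda) (simp add: qcomplexify_def)
  from bounded_linear.sums[OF bounded_linear_qcomplexify this]
  show ?thesis using assms sums_unique2 by blast
qed

locale qpowser_slice = qpowser +
  fixes I :: quat
  assumes I: "I \<in> qsphere"
begin

definition slice_comp :: "4 \<Rightarrow> complex \<Rightarrow> complex" where
  "slice_comp k z = qcomplexify I (f (qslice_point I z)) k"

lemma sums_slice_comp:
  assumes "cmod z < 1"
  shows "(\<lambda>n. qcomplexify I (a n) k * z ^ n) sums slice_comp k z"
  using bounded_linear.sums[OF bounded_linear_qcomplexify sums_qslice[OF I assms]]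
  by (simp add: slice_comp_def mult_qcomplexify[OF I] mult.commute)

lemma holomorphic_slice_comp: "slice_comp k holomorphic_on ball 0 1"
  by (rule power_series_holomorphic[where a = "\<lambda>n. qcomplexify I (a n) k"]) (simp add: sums_slice_comp)

lemma has_field_derivative_slice_comp:
  "cmod z < 1 \<Longrightarrow> (slice_comp k has_field_derivative deriv (slice_comp k) z) (at z)"
  by (rule holomorphic_derivI[OF holomorphic_slice_comp]) auto

lemma has_field_derivative_deriv_slice_comp:
  "cmod z < 1 \<Longrightarrow> (deriv (slice_comp k) has_field_derivative deriv (deriv (slice_comp k)) z) (at z)"
  by (rule holomorphic_derivI[OF holomorphic_deriv[OF holomorphic_slice_comp]]) auto

lemma qslice_eq_slice_comp: "f (qslice_point I z) = (\<chi> k. Re (slice_comp k z))"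
  by (simp add: slice_comp_def qcomplexify_def vec_eq_iff)

text \<open>A Cauchy-Riemann equation for slices: z times the derivative is the series with
  coefficients n a_n, so its complexified coordinates again satisfy Im = - I Re.\<close>
lemma qmult_slice_comp_deriv:
  assumes z: "cmod z < 1"
  shows "qmult I (\<chi> k. Re (z * deriv (slice_comp k) z)) = (\<chi> k. Re (\<i> * z * deriv (slice_comp k) z))"
proof -
  define s where "s k = z * deriv (slice_comp k) z" for k
  have "(\<lambda>n. qcomplexify I (qmult (qslice_point I (z ^ n)) (of_nat n *\<^sub>R a n)) k) sums s k" for k
  proof -
    have "(\<lambda>n. diffs (\<lambda>n. qcomplexify I (a n) k) n * z ^ n) sums deriv (slice_comp k) z"
      using z by (intro termdiffs_sums_strong[where K = 1 and f = "slice_comp k"] sums_slice_comp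
          has_field_derivative_slice_comp) auto
    from sums_mult[OF this, of z]
    have "(\<lambda>n. of_nat (Suc n) * qcomplexify I (a (Suc n)) k * z ^ Suc n) sums s k"
      by (simp add: s_def diffs_def algebra_simps)
    then have "(\<lambda>n. of_nat n * qcomplexify I (a n) k * z ^ n) sums s k"
      by (subst (asm) sums_Suc_iff) simp
    moreover have "qcomplexify I (qmult (qslice_point I (z ^ n)) (of_nat n *\<^sub>R a n)) k =
        of_nat n * qcomplexify I (a n) k * z ^ n" for n
      by (simp add: mult_qcomplexify[OF I, symmetric] qcomplexify_scaleR)
    ultimately show ?thesis by simp
  qed
  then have "Im (s k) = Im (qcomplexify I (\<chi> j. Re (s j)) k)" for k
    using sums_qcomplexify_eq by metis
  then have "Re (\<i> * s k) = qmult I (\<chi> j. Re (s j)) $ k" for k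
    by (simp add: qcomplexify_def)
  then show ?thesis
    by (simp add: s_def vec_eq_iff mult.assoc)
qed

definition slice_circ :: "real \<Rightarrow> real \<Rightarrow> quat" where
  "slice_circ r \<theta> = (\<chi> k. Re (slice_comp k (rcis r \<theta>)))"

definition slice_dr :: "real \<Rightarrow> real \<Rightarrow> quat" where
  "slice_dr r \<theta> = (\<chi> k. Re (cis \<theta> * deriv (slice_comp k) (rcis r \<theta>)))"

definition slice_drr :: "real \<Rightarrow> real \<Rightarrow> quat" where
  "slice_drr r \<theta> = (\<chi> k. Re (cis \<theta> * (cis \<theta> * deriv (deriv (slice_comp k)) (rcis r \<theta>))))"

definition slice_dt :: "real \<Rightarrow> real \<Rightarrow> quat" where
  "slice_dt r \<theta> = (\<chi> k. Re (\<i> * rcis r \<theta> * deriv (slice_comp k) (rcis r \<theta>)))"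

definition slice_dtt :: "real \<Rightarrow> real \<Rightarrow> quat" where
  "slice_dtt r \<theta> = (\<chi> k. Re (- (rcis r \<theta> * deriv (slice_comp k) (rcis r \<theta>))
     - (rcis r \<theta>)\<^sup>2 * deriv (deriv (slice_comp k)) (rcis r \<theta>)))"

lemma slice_circ_eq: "slice_circ r \<theta> = f (qslice_point I (rcis r \<theta>))"
  by (simp add: slice_circ_def qslice_eq_slice_comp)

lemma has_vector_derivative_slice_circ_radius:
  "\<bar>r\<bar> < 1 \<Longrightarrow> ((\<lambda>r. slice_circ r \<theta>) has_vector_derivative slice_dr r \<theta>) (at r)"
  unfolding slice_circ_def slice_dr_def
  by (intro has_vector_derivative_vec_lambda has_field_derivative_Re
      has_vector_derivative_rcis_radius has_field_derivative_slice_comp) simp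

lemma has_vector_derivative_slice_dr_radius:
  "\<bar>r\<bar> < 1 \<Longrightarrow> ((\<lambda>r. slice_dr r \<theta>) has_vector_derivative slice_drr r \<theta>) (at r)"
  unfolding slice_dr_def slice_drr_def
  by (intro has_vector_derivative_vec_lambda has_field_derivative_Re has_vector_derivative_mult_right
      has_vector_derivative_rcis_radius has_field_derivative_deriv_slice_comp) simp

lemma has_vector_derivative_slice_circ_angle:
  "\<bar>r\<bar> < 1 \<Longrightarrow> ((\<lambda>\<theta>. slice_circ r \<theta>) has_vector_derivative slice_dt r \<theta>) (at \<theta>)"
  unfolding slice_circ_def slice_dt_def
  by (intro has_vector_derivative_vec_lambda has_field_derivative_Re
      has_vector_derivative_rcis_angle has_field_derivative_slice_comp) simp

lemma has_vector_derivative_slice_dt_angle: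
  assumes "\<bar>r\<bar> < 1"
  shows "((\<lambda>\<theta>. slice_dt r \<theta>) has_vector_derivative slice_dtt r \<theta>) (at \<theta>)"
proof -
  have "((\<lambda>\<theta>. \<i> * (rcis r \<theta> * deriv (slice_comp k) (rcis r \<theta>))) has_vector_derivative
      - (rcis r \<theta> * deriv (slice_comp k) (rcis r \<theta>))
      - (rcis r \<theta>)\<^sup>2 * deriv (deriv (slice_comp k)) (rcis r \<theta>)) (at \<theta>)" for k
    using has_vector_derivative_rcis_angle[where g = "\<lambda>z. z", OF DERIV_ident]
      has_vector_derivative_rcis_angle[OF has_field_derivative_deriv_slice_comp, of r \<theta> k] assms
    by (auto intro!: derivative_eq_intros simp: power2_eq_square algebra_simps)
  then show ?thesis
    unfolding slice_dt_def slice_dtt_def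
    by (intro has_vector_derivative_vec_lambda has_field_derivative_Re) (simp add: mult.assoc)
qed

lemma slice_polar_laplacian:
  "r *\<^sub>R slice_dr r \<theta> + r\<^sup>2 *\<^sub>R slice_drr r \<theta> + slice_dtt r \<theta> = 0"
  by (simp add: slice_dr_def slice_drr_def slice_dtt_def vec_eq_iff rcis_def power2_eq_square
      algebra_simps)

lemma slice_dt_eq:
  assumes "\<bar>r\<bar> < 1"
  shows "slice_dt r \<theta> = qmult I (r *\<^sub>R slice_dr r \<theta>)"
proof -
  have "r *\<^sub>R slice_dr r \<theta> = (\<chi> k. Re (rcis r \<theta> * deriv (slice_comp k) (rcis r \<theta>)))"
    by (simp add: slice_dr_def vec_eq_iff rcis_def mult.assoc)
  then show ?thesis
    using qmult_slice_comp_deriv[of "rcis r \<theta>"] assms by (simp add: slice_dt_def)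
qed

lemma slice_circ_periodic: "slice_circ r (-pi) = slice_circ r pi"
  and slice_dt_periodic: "slice_dt r (-pi) = slice_dt r pi"
  by (simp_all only: slice_circ_def slice_dt_def rcis_minus_pi)

lemma continuous_on_slice_jets:
  "continuous_on ({-1<..<1} \<times> UNIV) (\<lambda>(r, \<theta>). slice_circ r \<theta>)"
  "continuous_on ({-1<..<1} \<times> UNIV) (\<lambda>(r, \<theta>). slice_dr r \<theta>)"
  "continuous_on ({-1<..<1} \<times> UNIV) (\<lambda>(r, \<theta>). slice_drr r \<theta>)"
proof -
  have "continuous_on ({-1<..<1} \<times> UNIV) (\<lambda>x. g (rcis (fst x) (snd x)))"
    if "g holomorphic_on ball 0 1" for g
    by (rule continuous_on_compose2[OF holomorphic_on_imp_continuous_on[OF that]])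
      (auto simp: rcis_def norm_mult intro!: continuous_intros)
  note cont = this[OF holomorphic_slice_comp] this[OF holomorphic_deriv[OF holomorphic_slice_comp]]
    this[OF holomorphic_deriv[OF holomorphic_deriv[OF holomorphic_slice_comp]]]
  show "continuous_on ({-1<..<1} \<times> UNIV) (\<lambda>(r, \<theta>). slice_circ r \<theta>)"
    "continuous_on ({-1<..<1} \<times> UNIV) (\<lambda>(r, \<theta>). slice_dr r \<theta>)"
    "continuous_on ({-1<..<1} \<times> UNIV) (\<lambda>(r, \<theta>). slice_drr r \<theta>)"
    unfolding slice_circ_def slice_dr_def slice_drr_def case_prod_beta
    by (intro continuous_on_vec_lambda continuous_intros cont; simp)+
qed

lemma slice_sqnorm_powr_subharmonic:
  assumes "\<epsilon> > 0" "q > 0" "0 < r" "r < 1"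
  shows "0 \<le> r * sqnorm_powr_deriv \<epsilon> q (slice_circ r \<theta>) (slice_dr r \<theta>)
      + r\<^sup>2 * sqnorm_powr_deriv2 \<epsilon> q (slice_circ r \<theta>) (slice_dr r \<theta>) (slice_drr r \<theta>)
      + sqnorm_powr_deriv2 \<epsilon> q (slice_circ r \<theta>) (slice_dt r \<theta>) (slice_dtt r \<theta>)"
  unfolding sqnorm_powr_deriv_scaleR sqnorm_powr_deriv2_scaleR
proof (rule sqnorm_powr_polar_laplacian_nonneg)
  have dt: "slice_dt r \<theta> = qmult I (r *\<^sub>R slice_dr r \<theta>)"
    using assms by (intro slice_dt_eq) simp
  show "inner (r *\<^sub>R slice_dr r \<theta>) (slice_dt r \<theta>) = 0"
    unfolding dt by (rule inner_qmult_qsphere[OF I])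
  show "norm (slice_dt r \<theta>) = norm (r *\<^sub>R slice_dr r \<theta>)"
    unfolding dt by (rule norm_qmult_qsphere[OF I])
qed (use assms slice_polar_laplacian in auto)

lemma continuous_on_slice_sqnorm_powr_jets:
  assumes "\<epsilon> > 0"
  shows "continuous_on ({-1<..<1} \<times> {-pi..pi}) (\<lambda>(r, \<theta>). sqnorm_powr \<epsilon> q (slice_circ r \<theta>))"
    and "continuous_on ({-1<..<1} \<times> {-pi..pi})
      (\<lambda>(r, \<theta>). sqnorm_powr_deriv \<epsilon> q (slice_circ r \<theta>) (slice_dr r \<theta>))"
    and "continuous_on ({-1<..<1} \<times> {-pi..pi})
      (\<lambda>(r, \<theta>). sqnorm_powr_deriv2 \<epsilon> q (slice_circ r \<theta>) (slice_dr r \<theta>) (slice_drr r \<theta>))"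
proof -
  have sub: "{-1<..<1} \<times> {-pi..pi} \<subseteq> {-1<..<(1::real)} \<times> (UNIV :: real set)"
    by auto
  note cont = continuous_on_subset[OF continuous_on_slice_jets(1) sub]
    continuous_on_subset[OF continuous_on_slice_jets(2) sub]
    continuous_on_subset[OF continuous_on_slice_jets(3) sub]
  show "continuous_on ({-1<..<1} \<times> {-pi..pi}) (\<lambda>(r, \<theta>). sqnorm_powr \<epsilon> q (slice_circ r \<theta>))"
    using cont(1) assms unfolding case_prod_beta by (intro continuous_intros)
  show "continuous_on ({-1<..<1} \<times> {-pi..pi})
      (\<lambda>(r, \<theta>). sqnorm_powr_deriv \<epsilon> q (slice_circ r \<theta>) (slice_dr r \<theta>))"
    using cont(1,2) assms unfolding case_prod_beta sqnorm_powr_deriv_def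
    by (intro continuous_intros) (auto simp: sqnorm_add_ne_zero)
  show "continuous_on ({-1<..<1} \<times> {-pi..pi})
      (\<lambda>(r, \<theta>). sqnorm_powr_deriv2 \<epsilon> q (slice_circ r \<theta>) (slice_dr r \<theta>) (slice_drr r \<theta>))"
    using cont assms unfolding case_prod_beta sqnorm_powr_deriv2_def
    by (intro continuous_intros) (auto simp: sqnorm_add_ne_zero)
qed

lemma circle_integral_sqnorm_powr_mono:
  assumes "\<epsilon> > 0" "q > 0" "0 \<le> r" "r \<le> s" "s < 1"
  shows "integral {-pi..pi} (\<lambda>\<theta>. sqnorm_powr \<epsilon> q (slice_circ r \<theta>))
    \<le> integral {-pi..pi} (\<lambda>\<theta>. sqnorm_powr \<epsilon> q (slice_circ s \<theta>))"
proof (rule circle_mean_mono[OF _ _ _ _ continuous_on_slice_sqnorm_powr_jets[OF assms(1)]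
      slice_sqnorm_powr_subharmonic[OF assms(1,2)] assms(3-5)])
  fix r \<theta> :: real
  assume r: "\<bar>r\<bar> < 1"
  show "((\<lambda>r. sqnorm_powr \<epsilon> q (slice_circ r \<theta>)) has_real_derivative
      sqnorm_powr_deriv \<epsilon> q (slice_circ r \<theta>) (slice_dr r \<theta>)) (at r)"
    by (rule has_real_derivative_sqnorm_powr[OF has_vector_derivative_slice_circ_radius[OF r] assms(1)])
  show "((\<lambda>r. sqnorm_powr_deriv \<epsilon> q (slice_circ r \<theta>) (slice_dr r \<theta>)) has_real_derivative
      sqnorm_powr_deriv2 \<epsilon> q (slice_circ r \<theta>) (slice_dr r \<theta>) (slice_drr r \<theta>)) (at r)"
    by (rule has_real_derivative_sqnorm_powr_deriv[OF has_vector_derivative_slice_circ_radius[OF r]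
          has_vector_derivative_slice_dr_radius[OF r] assms(1)])
  show "((\<lambda>\<theta>. sqnorm_powr_deriv \<epsilon> q (slice_circ r \<theta>) (slice_dt r \<theta>)) has_real_derivative
      sqnorm_powr_deriv2 \<epsilon> q (slice_circ r \<theta>) (slice_dt r \<theta>) (slice_dtt r \<theta>)) (at \<theta>)"
    by (rule has_real_derivative_sqnorm_powr_deriv[OF has_vector_derivative_slice_circ_angle[OF r]
          has_vector_derivative_slice_dt_angle[OF r] assms(1)])
  show "sqnorm_powr_deriv \<epsilon> q (slice_circ r (-pi)) (slice_dt r (-pi)) =
      sqnorm_powr_deriv \<epsilon> q (slice_circ r pi) (slice_dt r pi)"
    by (simp only: slice_circ_periodic slice_dt_periodic)
qed

lemma continuous_on_slice_circ: "\<bar>r\<bar> < 1 \<Longrightarrow> continuous_on S (slice_circ r)"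
  using continuous_on_section[OF continuous_on_slice_jets(1), of r]
  by (auto simp: abs_less_iff intro: continuous_on_subset)

lemma continuous_on_norm_slice_circ_powr:
  "\<bar>r\<bar> < 1 \<Longrightarrow> p > 0 \<Longrightarrow> continuous_on S (\<lambda>\<theta>. norm (slice_circ r \<theta>) powr p)"
  by (intro continuous_on_powr' continuous_intros continuous_on_slice_circ) auto

lemma circle_integral_norm_powr_mono:
  assumes p: "p > 0" and rs: "0 \<le> r" "r \<le> s" "s < 1"
  shows "integral {-pi..pi} (\<lambda>\<theta>. norm (slice_circ r \<theta>) powr p)
    \<le> integral {-pi..pi} (\<lambda>\<theta>. norm (slice_circ s \<theta>) powr p)"
proof -
  define g where "g \<rho> \<epsilon> = integral {-pi..pi} (\<lambda>\<theta>. sqnorm_powr \<epsilon> (p/2) (slice_circ \<rho> \<theta>))" for \<rho> \<epsilon>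
  have "(g \<rho> \<longlongrightarrow> g \<rho> 0) (at_right 0)" if "\<bar>\<rho>\<bar> < 1" for \<rho>
  proof (rule continuous_on_Icc_at_rightD)
    have "continuous_on ({0..1} \<times> cbox (-pi) pi) (\<lambda>x. slice_circ \<rho> (snd x))"
      by (rule continuous_on_compose2[OF continuous_on_slice_circ[OF that, of UNIV]])
        (auto intro: continuous_intros)
    then have "continuous_on ({0..1} \<times> cbox (-pi) pi)
        (\<lambda>(\<epsilon>, \<theta>). ((norm (slice_circ \<rho> \<theta>))\<^sup>2 + \<epsilon>) powr (p/2))"
      unfolding case_prod_beta using p
      by (intro continuous_on_powr' continuous_intros) (auto simp: add_nonneg_nonneg)
    from integral_continuous_on_param[OF this]
    show "continuous_on {0..1} (g \<rho>)"
      by (simp add: g_def sqnorm_powr_def)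
  qed simp
  moreover have "\<forall>\<^sub>F \<epsilon> in at_right 0. g r \<epsilon> \<le> g s \<epsilon>"
    using eventually_at_right_real[of 0 "1::real"]
    by (rule eventually_mono) (use p rs in \<open>auto simp: g_def intro!: circle_integral_sqnorm_powr_mono\<close>)
  ultimately have "g r 0 \<le> g s 0"
    using rs by (intro tendsto_le[of "at_right 0" "g s" _ "g r"]) auto
  then show ?thesis
    by (simp add: g_def sqnorm_powr_zero)
qed

lemma Mp_mono:
  assumes "p > 0" "0 \<le> r" "r \<le> s" "s < 1"
  shows "Mp p f I r \<le> Mp p f I s"
proof -
  have "0 \<le> integral {-pi..pi} (\<lambda>\<theta>. norm (slice_circ r \<theta>) powr p)"
    using assms by (intro integral_nonneg integrable_continuous_real
        continuous_on_norm_slice_circ_powr) auto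
  then show ?thesis
    unfolding Mp_eq_integral slice_circ_eq[symmetric]
    using circle_integral_norm_powr_mono[OF assms] assms(1)
    by (intro powr_mono2 divide_right_mono) auto
qed

end

section \<open>Hardy norms\<close>

context qpowser
begin

lemma norm_qslice_powr_le:
  assumes "I \<in> qsphere" "J \<in> qsphere" "cmod z < 1" "p > 0"
  shows "norm (f (qslice_point I z)) powr p \<le> (if p < 1 then 1 else 2 powr (p - 1)) *
    (norm (f (qslice_point J z)) powr p + norm (f (qslice_point J (cnj z))) powr p)"
proof -
  have "norm (f (qslice_point I z)) powr p
      \<le> (norm (f (qslice_point J z)) + norm (f (qslice_point J (cnj z)))) powr p"
    using norm_qslice_le[OF assms(1-3)] assms(4) by (intro powr_mono2) auto
  also have "\<dots> \<le> (if p < 1 then 1 else 2 powr (p - 1)) *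
      (norm (f (qslice_point J z)) powr p + norm (f (qslice_point J (cnj z))) powr p)"
    using assms(4) by (intro powr_add_le) auto
  finally show ?thesis .
qed

lemma circle_integral_qslice_le:
  assumes I: "I \<in> qsphere" and J: "J \<in> qsphere" and r: "\<bar>r\<bar> < 1" and p: "p > 0"
  shows "integral {-pi..pi} (\<lambda>\<theta>. norm (f (qslice_point I (rcis r \<theta>))) powr p)
    \<le> (if p < 1 then 2 else 2 powr p) *
      integral {-pi..pi} (\<lambda>\<theta>. norm (f (qslice_point J (rcis r \<theta>))) powr p)"
proof -
  interpret SI: qpowser_slice a f I by unfold_locales (rule I)
  interpret SJ: qpowser_slice a f J by unfold_locales (rule J)
  define A where "A \<theta> = norm (f (qslice_point J (rcis r \<theta>)))" for \<theta>
  define K where "K = (if p < 1 then 1 else 2 powr (p - 1))"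
  have int_A: "(\<lambda>\<theta>. A \<theta> powr p) integrable_on {-pi..pi}"
    using SJ.continuous_on_norm_slice_circ_powr[OF r p]
    by (simp add: A_def SJ.slice_circ_eq integrable_continuous_real)
  then have int_A': "(\<lambda>\<theta>. A (-\<theta>) powr p) integrable_on {-pi..pi}"
    using iffD2[OF Henstock_Kurzweil_Integration.integrable_reflect_real[where
          f = "\<lambda>\<theta>. A \<theta> powr p" and a = "-pi" and b = pi]]
    by (simp only: minus_minus)
  have pointwise: "norm (f (qslice_point I (rcis r \<theta>))) powr p \<le> K * (A \<theta> powr p + A (-\<theta>) powr p)"
    for \<theta>
  proof -
    have "cnj (rcis r \<theta>) = rcis r (-\<theta>)"
      by (simp add: rcis_def cis_cnj)
    then show ?thesis
      using norm_qslice_powr_le[OF I J _ p, of "rcis r \<theta>"] r by (simp add: A_def K_def)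
  qed
  have "integral {-pi..pi} (\<lambda>\<theta>. norm (f (qslice_point I (rcis r \<theta>))) powr p)
      \<le> integral {-pi..pi} (\<lambda>\<theta>. K * (A \<theta> powr p + A (-\<theta>) powr p))"
  proof (rule integral_le[OF _ _ pointwise])
    show "(\<lambda>\<theta>. norm (f (qslice_point I (rcis r \<theta>))) powr p) integrable_on {-pi..pi}"
      using SI.continuous_on_norm_slice_circ_powr[OF r p]
      by (simp add: SI.slice_circ_eq integrable_continuous_real)
    show "(\<lambda>\<theta>. K * (A \<theta> powr p + A (-\<theta>) powr p)) integrable_on {-pi..pi}"
      using integrable_cmul[OF integrable_add[OF int_A int_A'], of K] by simp
  qed
  also have "\<dots> = K * (integral {-pi..pi} (\<lambda>\<theta>. A \<theta> powr p) + integral {-pi..pi} (\<lambda>\<theta>. A (-\<theta>) powr p))"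
    using int_A int_A' by (simp add: integral_add)
  also have "integral {-pi..pi} (\<lambda>\<theta>. A (-\<theta>) powr p) = integral {-pi..pi} (\<lambda>\<theta>. A \<theta> powr p)"
    using Henstock_Kurzweil_Integration.integral_reflect_real[where
        f = "\<lambda>\<theta>. A \<theta> powr p" and a = "-pi" and b = pi] by simp
  also have "K * (integral {-pi..pi} (\<lambda>\<theta>. A \<theta> powr p) + integral {-pi..pi} (\<lambda>\<theta>. A \<theta> powr p))
      = (if p < 1 then 2 else 2 powr p) * integral {-pi..pi} (\<lambda>\<theta>. A \<theta> powr p)"
    by (simp add: K_def powr_diff)
  finally show ?thesis by (simp add: A_def)
qed

lemma Mp_qslice_le:
  assumes I: "I \<in> qsphere" and J: "J \<in> qsphere" and r: "\<bar>r\<bar> < 1" and p: "p > 0"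
  shows "Mp p f I r \<le> (if p < 1 then 2 powr (1 / p) else 2) * Mp p f J r"
proof -
  define X where "X = integral {-pi..pi} (\<lambda>\<theta>. norm (f (qslice_point I (rcis r \<theta>))) powr p)"
  define Y where "Y = integral {-pi..pi} (\<lambda>\<theta>. norm (f (qslice_point J (rcis r \<theta>))) powr p)"
  define K where "K = (if p < 1 then 2 else 2 powr p)"
  interpret SI: qpowser_slice a f I by unfold_locales (rule I)
  have "0 \<le> X"
    using SI.continuous_on_norm_slice_circ_powr[OF r p]
    by (simp add: X_def SI.slice_circ_eq integral_nonneg integrable_continuous_real)
  moreover have "X \<le> K * Y"
    unfolding X_def Y_def K_def by (rule circle_integral_qslice_le[OF I J r p])
  ultimately have "(X / (2 * pi)) powr (1 / p) \<le> (K * (Y / (2 * pi))) powr (1 / p)"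
    using p \<open>0 \<le> X\<close> by (intro powr_mono2) (auto simp: divide_right_mono)
  also have "\<dots> = K powr (1 / p) * (Y / (2 * pi)) powr (1 / p)"
    by (rule powr_mult)
  also have "K powr (1 / p) = (if p < 1 then 2 powr (1 / p) else 2)"
    using p by (simp add: K_def powr_powr)
  finally show ?thesis
    by (simp add: Mp_eq_integral X_def Y_def)
qed

lemma slice_hardy_norm_eq_SUP:
  assumes "I \<in> qsphere" "p > 0"
  shows "slice_hardy_norm (ereal p) f I = (SUP r\<in>{0..<1}. ereal (Mp p f I r))"
proof -
  interpret qpowser_slice a f I by unfold_locales (rule assms(1))
  have "((\<lambda>r. ereal (Mp p f I r)) \<longlongrightarrow> (SUP r\<in>{0..<1}. ereal (Mp p f I r))) (at_left 1)"
    by (rule mono_tendsto_SUP_at_left) (simp_all add: Mp_mono assms(2))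
  then show ?thesis
    by (simp add: slice_hardy_norm_def tendsto_Lim trivial_limit_at_left_real)
qed

lemma hardy_norm_le_slice_hardy_norm_finite:
  assumes J: "J \<in> qsphere" and p: "p > 0"
  shows "hardy_norm (ereal p) f
    \<le> ereal (if p < 1 then 2 powr (1 / p) else 2) * slice_hardy_norm (ereal p) f J"
proof -
  define c where "c = (if p < 1 then 2 powr (1 / p) else (2::real))"
  have "slice_hardy_norm (ereal p) f I \<le> ereal c * slice_hardy_norm (ereal p) f J"
    if I: "I \<in> qsphere" for I
    unfolding slice_hardy_norm_eq_SUP[OF I p] slice_hardy_norm_eq_SUP[OF J p]
  proof (rule SUP_least)
    fix r :: real assume r: "r \<in> {0..<1}"
    have "ereal (Mp p f I r) \<le> ereal c * ereal (Mp p f J r)"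
      using Mp_qslice_le[OF I J _ p, of r] r by (simp add: c_def)
    also have "\<dots> \<le> ereal c * (SUP r\<in>{0..<1}. ereal (Mp p f J r))"
      using r by (intro ereal_mult_left_mono SUP_upper) (auto simp: c_def)
    finally show "ereal (Mp p f I r) \<le> ereal c * (SUP r\<in>{0..<1}. ereal (Mp p f J r))" .
  qed
  then show ?thesis
    by (simp add: hardy_norm_def c_def SUP_least)
qed

lemma hardy_norm_le_slice_hardy_norm_infinity:
  assumes J: "J \<in> qsphere"
  shows "hardy_norm \<infinity> f \<le> 2 * slice_hardy_norm \<infinity> f J"
proof -
  have slice: "ereal (norm (f (qslice_point J z))) \<le> slice_hardy_norm \<infinity> f J" if "cmod z < 1" for z
    using that norm_qslice_point[OF J]
    by (auto simp: slice_hardy_norm_def qball_def qslice_point_in_qslice intro!: SUP_upper)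
  have "ereal (norm (f q)) \<le> slice_hardy_norm \<infinity> f J + slice_hardy_norm \<infinity> f J" if "q \<in> qball" for q
  proof -
    obtain I z where I: "I \<in> qsphere" and q: "q = qslice_point I z"
      using quat_eq_qslice_point by blast
    have z: "cmod z < 1"
      using that norm_qslice_point[OF I] by (simp add: qball_def q)
    have "ereal (norm (f q))
        \<le> ereal (norm (f (qslice_point J z))) + ereal (norm (f (qslice_point J (cnj z))))"
      using norm_qslice_le[OF I J z] by (simp add: q)
    also have "\<dots> \<le> slice_hardy_norm \<infinity> f J + slice_hardy_norm \<infinity> f J"
      using slice[OF z] slice[of "cnj z"] z by (intro add_mono) auto
    finally show ?thesis .
  qed
  then show ?thesis
    by (simp add: hardy_norm_def mult_2_ereal[simplified] SUP_least)
qed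

lemma slice_regular: "slice_regular f"
  using sums_qpowser by (auto simp: slice_regular_def)

lemma hardy_norm_bounds:
  assumes J: "J \<in> qsphere" and p: "p > 0"
  shows "slice_hardy_norm p f J \<le> hardy_norm p f"
    and "hardy_norm p f
      \<le> (if p < 1 then ereal (2 powr (1 / real_of_ereal p)) else 2) * slice_hardy_norm p f J"
proof -
  show "slice_hardy_norm p f J \<le> hardy_norm p f"
    using J by (auto simp: hardy_norm_def slice_hardy_norm_def intro: SUP_upper SUP_subset_mono)
  show "hardy_norm p f
      \<le> (if p < 1 then ereal (2 powr (1 / real_of_ereal p)) else 2) * slice_hardy_norm p f J"
  proof (cases p)
    case (real p')
    then show ?thesis
      using hardy_norm_le_slice_hardy_norm_finite[OF J, of p'] p by auto
  qed (use p hardy_norm_le_slice_hardy_norm_infinity[OF J] in auto)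
qed

lemma hardy_space_iff:
  assumes p: "p > 0"
  shows "f \<in> hardy_space p \<longleftrightarrow> (\<exists>J \<in> qsphere. slice_hardy_norm p f J < \<infinity>)"
proof
  assume "f \<in> hardy_space p"
  then have "hardy_norm p f < \<infinity>"
    by (simp add: hardy_space_def)
  then have "slice_hardy_norm p f (qmk 0 1 0 0) < \<infinity>"
    by (rule le_less_trans[OF hardy_norm_bounds(1)[OF qsphere_nonempty p]])
  then show "\<exists>J \<in> qsphere. slice_hardy_norm p f J < \<infinity>"
    using qsphere_nonempty by blast
next
  assume "\<exists>J \<in> qsphere. slice_hardy_norm p f J < \<infinity>"
  then obtain J where J: "J \<in> qsphere" "slice_hardy_norm p f J < \<infinity>"
    by blast
  have "(if p < 1 then ereal (2 powr (1 / real_of_ereal p)) else 2) * slice_hardy_norm p f J < \<infinity>"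
    using J(2) by (cases "slice_hardy_norm p f J") auto
  then have "hardy_norm p f < \<infinity>"
    by (rule le_less_trans[OF hardy_norm_bounds(2)[OF J(1) p]])
  then show "f \<in> hardy_space p"
    using slice_regular by (simp add: hardy_space_def)
qed

end

theorem mainTheorem2:
  fixes f :: "quat \<Rightarrow> quat" and p :: ereal
  assumes "slice_regular f" and "0 < p"
  shows "(f \<in> hardy_space p \<longleftrightarrow> (\<exists>J \<in> qsphere. slice_hardy_norm p f J < \<infinity>)) \<and>
         (\<forall>J \<in> qsphere. slice_hardy_norm p f J < \<infinity> \<longrightarrow>
            slice_hardy_norm p f J \<le> hardy_norm p f \<and>
            hardy_norm p f \<le>
              (if p < 1 then ereal (2 powr (1 / real_of_ereal p)) else 2) * slice_hardy_norm p f J)"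
proof -
  obtain a where "qpowser a f"
    using assms(1) by (auto simp: slice_regular_def qpowser_def)
  then interpret qpowser a f .
  show ?thesis
    using hardy_space_iff[OF assms(2)] hardy_norm_bounds[OF _ assms(2)] by blast
qed

end
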